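(* Let $\sigma$ be a permutation of $[n]$ and let $T_\sigma=\Psi(\sigma)$. Then $\mathrm{inv}(\sigma)=\mathrm{inv}(T_\sigma)$, $\mathrm{RLmin}(\sigma)=|R_{T_\sigma}|$, and $\mathrm{IDes}(\sigma)=\mathrm{IDes}(T_\sigma)$.
   Context: The map $\Psi$ sends a word $\pi$ of distinct integers to an increasing binary tree: $\Psi(\emptyset)=\emptyset$; otherwise write $\pi=\sigma\, i\,\tau$ with $i$ the least letter, and let $\Psi(\pi)$ have root $i$, left subtree $\Psi(\sigma)$, right subtree $\Psi(\tau)$. For a permutation $\sigma=\sigma_1\cdots\sigma_n$: $\mathrm{inv}(\sigma)$ is the number of pairs $i<j$ with $\sigma_i>\sigma_j$; $\mathrm{RLmin}(\sigma)$ is the number of $\sigma_i$ with $\sigma_j>\sigma_i$ for all $j>i$; $\mathrm{IDes}(\sigma)=\mathrm{Des}(\sigma^{-1})$, the set of $i\in[n-1]$ such that $i+1$ appears to the left of $i$ in $\sigma$. For an increasing binary tree $T$ on $[n]$ (root labeled $1$): an inversion of $T$ is a pair of vertices $(i,j)$ with $i>j$ such that either $j$ lies to the right of the path from the root $1$ to $i$, or $j$ is on the path from the root to $i$ and the left child of $j$ is on this path. $\mathrm{inv}(T)$ is the number of inversions of $T$; $\mathrm{IDes}(T)$ is the set of $i-1$ such that $(i,i-1)$ is an inversion of $T$; $R_T$ is the set of vertices of $T$ that do not belong to any left subtree of $T$ (i.e. the root together with the vertices reached from it by moving only to right children). *)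

theory Defs
  imports Main "HOL-Library.Tree"
begin

lemma length_takeWhile_neq_less:
  "i \<in> set ys \<Longrightarrow> length (takeWhile (\<lambda>y. y \<noteq> i) ys) < length ys"
  by (induction ys) auto

function psi :: "nat list \<Rightarrow> nat tree" where
  "psi [] = Leaf"
| "psi (x # xs) =
     (let i = Min (set (x # xs))
      in Node (psi (takeWhile (\<lambda>y. y \<noteq> i) (x # xs))) i
              (psi (tl (dropWhile (\<lambda>y. y \<noteq> i) (x # xs)))))"
  by pat_completeness auto
termination
proof (relation "measure length")
  fix x xs i
  assume i: "i = Min (set (x # xs))"
  have "i \<in> set (x # xs)" using i by (metis List.finite_set Min_in list.distinct(1) set_empty)
  then have "length (takeWhile (\<lambda>y. y \<noteq> i) (x # xs)) < length (x # xs)"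
    by (rule length_takeWhile_neq_less)
  then show "(takeWhile (\<lambda>y. y \<noteq> i) (x # xs), x # xs) \<in> measure length" by simp
  have "length (dropWhile (\<lambda>y. y \<noteq> i) (x # xs)) \<le> length (x # xs)"
    by (metis length_dropWhile_le)
  then show "(tl (dropWhile (\<lambda>y. y \<noteq> i) (x # xs)), x # xs) \<in> measure length" by simp
qed simp

definition perm_inv :: "nat list \<Rightarrow> nat" where
  "perm_inv s = card {(i, j). i < j \<and> j < length s \<and> s ! i > s ! j}"

definition RLmin :: "nat list \<Rightarrow> nat" where
  "RLmin s = card {i. i < length s \<and> (\<forall>j. i < j \<and> j < length s \<longrightarrow> s ! j > s ! i)}"

definition IDes_perm :: "nat list \<Rightarrow> nat set" where
  "IDes_perm s = {i. 1 \<le> i \<and> i < length s \<and>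
     (\<exists>p q. p < q \<and> q < length s \<and> s ! p = i + 1 \<and> s ! q = i)}"

fun label_at :: "'a tree \<Rightarrow> bool list \<Rightarrow> 'a option" where
  "label_at Leaf _ = None"
| "label_at (Node l x r) [] = Some x"
| "label_at (Node l x r) (False # a) = label_at l a"
| "label_at (Node l x r) (True # a) = label_at r a"

(* the vertex at address q lies to the right of the path from the root to the vertex at address p *)
definition right_of_path :: "bool list \<Rightarrow> bool list \<Rightarrow> bool" where
  "right_of_path p q \<longleftrightarrow>
     (\<exists>c d e. p = c @ False # d \<and> q = c @ True # e) \<or> (\<exists>e. q = p @ True # e)"

definition tree_inversion :: "nat tree \<Rightarrow> nat \<Rightarrow> nat \<Rightarrow> bool" where
  "tree_inversion T i j \<longleftrightarrow> i > j \<and>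
     (\<exists>p q. label_at T p = Some i \<and> label_at T q = Some j \<and>
        (right_of_path p q \<or> (\<exists>d. p = q @ False # d)))"

definition tree_inv :: "nat tree \<Rightarrow> nat" where
  "tree_inv T = card {(i, j). tree_inversion T i j}"

definition IDes_tree :: "nat tree \<Rightarrow> nat set" where
  "IDes_tree T = {k. \<exists>i. k = i - 1 \<and> tree_inversion T i (i - 1)}"

definition R_tree :: "nat tree \<Rightarrow> nat set" where
  "R_tree T = {v. \<exists>m. label_at T (replicate m True) = Some v}"

end

(*
  The in-order word of psi sigma is sigma itself: for sigma = sigma' i tau the root i sits
  between psi sigma' and psi tau. The vertices j that lie right of the path to i, or are
  ancestors of i entered through their left child, are exactly those following i in in-order,
  so an inversion (i, j) of a tree is a pair i > j with i read before j. Hence inversions and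
  inverse descents of sigma and of psi sigma coincide. For right-to-left minima: i is one, no
  letter of sigma' is one (i follows it), and the others are those of tau; correspondingly the
  right spine of psi sigma is i followed by the right spine of psi tau.
*)
theory Submission
  imports Defs
begin

fun precedes :: "'a list \<Rightarrow> 'a \<Rightarrow> 'a \<Rightarrow> bool" where
  "precedes [] a b \<longleftrightarrow> False"
| "precedes (x # xs) a b \<longleftrightarrow> x = a \<and> b \<in> set xs \<or> precedes xs a b"

lemma precedes_append:
  "precedes (xs @ ys) a b \<longleftrightarrow> precedes xs a b \<or> precedes ys a b \<or> a \<in> set xs \<and> b \<in> set ys"
  by (induction xs) auto

lemma precedes_in_set: "precedes xs a b \<Longrightarrow> a \<in> set xs \<and> b \<in> set xs"
  by (induction xs) auto

lemma precedes_iff_nth: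
  "precedes xs a b \<longleftrightarrow> (\<exists>j<length xs. \<exists>i<j. xs ! i = a \<and> xs ! j = b)"
proof (induction xs)
  case (Cons x xs)
  show ?case
    by (simp add: Ex_less_Suc2 Cons in_set_conv_nth) blast
qed simp

definition inorder_before :: "bool list \<Rightarrow> bool list \<Rightarrow> bool" where
  "inorder_before p q \<longleftrightarrow> right_of_path p q \<or> (\<exists>d. p = q @ False # d)"

lemma inorder_before_simps:
  "\<not> inorder_before [] []"
  "\<not> inorder_before [] (False # q)"
  "inorder_before [] (True # q)"
  "inorder_before (False # p) []"
  "inorder_before (False # p) (False # q) \<longleftrightarrow> inorder_before p q"
  "inorder_before (False # p) (True # q)"
  "\<not> inorder_before (True # p) []"
  "\<not> inorder_before (True # p) (False # q)"
  "inorder_before (True # p) (True # q) \<longleftrightarrow> inorder_before p q"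
  unfolding inorder_before_def right_of_path_def by (auto simp: Cons_eq_append_conv)

lemma ex_address_split: "(\<exists>p. P p) \<longleftrightarrow> P [] \<or> (\<exists>p. P (False # p)) \<or> (\<exists>p. P (True # p))"
  by (metis (full_types) list.exhaust)

lemma ex_label_at_Node:
  "(\<exists>p. label_at (Node l x r) p = Some a \<and> P p) \<longleftrightarrow>
     x = a \<and> P [] \<or> (\<exists>p. label_at l p = Some a \<and> P (False # p)) \<or>
     (\<exists>p. label_at r p = Some a \<and> P (True # p))"
  by (subst ex_address_split) auto

lemma ex_label_at_iff: "(\<exists>p. label_at T p = Some a) \<longleftrightarrow> a \<in> set_tree T"
proof (induction T)
  case (Node l x r)
  then show ?case
    using ex_label_at_Node[of l x r a "\<lambda>_. True"] by auto
qed simp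

lemma ex_inorder_before_iff_precedes:
  "(\<exists>p q. label_at T p = Some a \<and> label_at T q = Some b \<and> inorder_before p q)
     \<longleftrightarrow> precedes (inorder T) a b"
proof (induction T)
  case (Node l x r)
  have "(\<exists>p q. label_at (Node l x r) p = Some a \<and> label_at (Node l x r) q = Some b \<and> inorder_before p q)
     \<longleftrightarrow> x = a \<and> b \<in> set_tree r \<or> a \<in> set_tree l \<and> x = b \<or> a \<in> set_tree l \<and> b \<in> set_tree r \<or>
         (\<exists>p q. label_at l p = Some a \<and> label_at l q = Some b \<and> inorder_before p q) \<or>
         (\<exists>p q. label_at r p = Some a \<and> label_at r q = Some b \<and> inorder_before p q)"
    by (simp add: ex_label_at_Node inorder_before_simps flip: ex_label_at_iff) blast
  then show ?case
    using Node by (auto simp: precedes_append)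
qed simp

lemma tree_inversion_iff: "tree_inversion T a b \<longleftrightarrow> b < a \<and> precedes (inorder T) a b"
  using ex_inorder_before_iff_precedes[of T a b]
  unfolding tree_inversion_def inorder_before_def by blast

lemma psi_split:
  assumes "i \<notin> set A" and "\<forall>y\<in>set (A @ i # B). i \<le> y"
  shows "psi (A @ i # B) = Node (psi A) i (psi B)"
proof -
  have "Min (set (A @ i # B)) = i"
    using assms(2) by (intro Min_eqI) auto
  moreover obtain x xs where "A @ i # B = x # xs"
    by (cases A) auto
  moreover have "\<And>y. y \<in> set A \<Longrightarrow> y \<noteq> i"
    using assms(1) by blast
  then have "takeWhile (\<lambda>y. y \<noteq> i) (A @ i # B) = A"
    and "dropWhile (\<lambda>y. y \<noteq> i) (A @ i # B) = i # B"
    by (simp_all add: takeWhile_append2 dropWhile_append2)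
  ultimately show ?thesis
    by (metis list.sel(3) psi.simps(2))
qed

lemma psi_induct [case_names Nil split]:
  fixes xs :: "nat list"
  assumes "P []"
    and "\<And>A i B. i \<notin> set A \<Longrightarrow> \<forall>y\<in>set (A @ i # B). i \<le> y \<Longrightarrow> P A \<Longrightarrow> P B
           \<Longrightarrow> P (A @ i # B)"
  shows "P xs"
proof (induction xs rule: length_induct)
  case (1 xs)
  show ?case
  proof (cases "xs = []")
    case False
    define m where "m = Min (set xs)"
    then have "m \<in> set xs" using False by simp
    then obtain A B where xs: "xs = A @ m # B" and "m \<notin> set A"
      by (metis split_list_first)
    moreover have "P A" "P B"
      using 1 unfolding xs by simp_all
    moreover have "\<forall>y\<in>set xs. m \<le> y"
      unfolding m_def by simp
    ultimately show ?thesis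
      using assms(2) by simp
  qed (simp add: assms(1))
qed

lemma inorder_psi: "inorder (psi xs) = xs"
  by (induction xs rule: psi_induct) (simp_all add: psi_split)

lemma R_tree_Leaf: "R_tree Leaf = {}"
  by (simp add: R_tree_def)

lemma R_tree_Node: "R_tree (Node l x r) = insert x (R_tree r)"
proof -
  have "(\<exists>m. label_at (Node l x r) (replicate m True) = Some v) \<longleftrightarrow>
        v = x \<or> (\<exists>m. label_at r (replicate m True) = Some v)" for v
    by (metis (no_types) label_at.simps(2,4) old.nat.exhaust option.inject replicate_0 replicate_Suc)
  then show ?thesis
    unfolding R_tree_def by blast
qed

lemma R_tree_subset_set_tree: "R_tree T \<subseteq> set_tree T"
  by (induction T) (auto simp: R_tree_Leaf R_tree_Node)

lemma RLmin_Cons: "RLmin (x # xs) = RLmin xs + (if \<forall>y\<in>set xs. x < y then 1 else 0)"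
proof -
  define M where "M = {i. \<forall>j. i < j \<and> j < length (x # xs) \<longrightarrow> (x # xs) ! i < (x # xs) ! j}"
  have "RLmin (x # xs) = card {k \<in> M. k < Suc (length xs)}"
    unfolding RLmin_def M_def by (auto intro: arg_cong[where f = card])
  moreover have "RLmin xs = card {k. Suc k \<in> M \<and> k < length xs}"
    unfolding RLmin_def M_def by (auto intro!: arg_cong[where f = card] simp: less_Suc_eq_0_disj)
  moreover have "0 \<in> M \<longleftrightarrow> (\<forall>y\<in>set xs. x < y)"
    unfolding M_def by (auto simp: all_set_conv_all_nth less_Suc_eq_0_disj)
  ultimately show ?thesis
    using card_less_Suc[of M] card_less_Suc2[of M] by auto
qed

lemma RLmin_append_dominated:
  "\<forall>y\<in>set ys. \<exists>z\<in>set zs. z \<le> y \<Longrightarrow> RLmin (ys @ zs) = RLmin zs"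
proof (induction ys)
  case (Cons y ys)
  then have "\<not> (\<forall>w\<in>set (ys @ zs). y < w)"
    by (auto simp: not_less)
  then show ?case
    using Cons by (simp add: RLmin_Cons)
qed simp

lemma card_R_tree_psi: "distinct xs \<Longrightarrow> card (R_tree (psi xs)) = RLmin xs"
proof (induction xs rule: psi_induct)
  case Nil
  then show ?case by (simp add: R_tree_Leaf RLmin_def)
next
  case (split A i B)
  have "i \<notin> set B" "distinct B"
    using split.prems by auto
  then have "i \<notin> R_tree (psi B)" and "finite (R_tree (psi B))"
    using R_tree_subset_set_tree[of "psi B"] inorder_psi[of B]
    by (auto simp flip: set_inorder intro: finite_subset)
  moreover have "RLmin (A @ i # B) = RLmin (i # B)"
    using split.hyps(2) by (intro RLmin_append_dominated) auto
  moreover have "\<forall>y\<in>set B. i < y"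
    using split.hyps(2) \<open>i \<notin> set B\<close> by (auto simp: le_less)
  ultimately show ?case
    using split.IH(2) \<open>distinct B\<close> by (simp add: psi_split split.hyps R_tree_Node RLmin_Cons)
qed

lemma perm_inv_eq_card_precedes:
  assumes "distinct s"
  shows "perm_inv s = card {(a, b). b < a \<and> precedes s a b}"
proof -
  let ?P = "{(i, j). i < j \<and> j < length s \<and> s ! i > s ! j}"
  let ?f = "\<lambda>(i, j). (s ! i, s ! j)"
  have "{(a, b). b < a \<and> precedes s a b} = ?f ` ?P"
    by (auto simp: precedes_iff_nth image_iff)
  moreover have "inj_on ?f ?P"
    using assms by (auto simp: inj_on_def nth_eq_iff_index_eq)
  ultimately show ?thesis
    unfolding perm_inv_def by (simp add: card_image)
qed

lemma tree_inv_eq_card_precedes: "tree_inv T = card {(a, b). b < a \<and> precedes (inorder T) a b}"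
  by (simp add: tree_inv_def tree_inversion_iff)

lemma IDes_tree_eq_precedes: "IDes_tree T = {k. precedes (inorder T) (Suc k) k}"
  unfolding IDes_tree_def tree_inversion_iff by (auto intro: exI[of _ "Suc _"])

lemma IDes_perm_eq_precedes:
  assumes "set s \<subseteq> {1..length s}"
  shows "IDes_perm s = {k. precedes s (Suc k) k}"
proof -
  have "1 \<le> k \<and> k < length s" if "precedes s (Suc k) k" for k
    using precedes_in_set[OF that] assms by fastforce
  then show ?thesis
    unfolding IDes_perm_def precedes_iff_nth by auto
qed

theorem proposition4p4:
  fixes n :: nat and \<sigma> :: "nat list"
  assumes "distinct \<sigma>" and "set \<sigma> = {1..n}"
  shows "perm_inv \<sigma> = tree_inv (psi \<sigma>)
    \<and> RLmin \<sigma> = card (R_tree (psi \<sigma>))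
    \<and> IDes_perm \<sigma> = IDes_tree (psi \<sigma>)"
proof -
  have "length \<sigma> = n"
    using distinct_card[OF assms(1)] assms(2) by simp
  then have "set \<sigma> \<subseteq> {1..length \<sigma>}"
    using assms(2) by simp
  then show ?thesis
    using assms(1)
    by (simp add: perm_inv_eq_card_precedes tree_inv_eq_card_precedes card_R_tree_psi
        IDes_perm_eq_precedes IDes_tree_eq_precedes inorder_psi)
qed

end
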